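(* Let $k\ge 2$, let $d$ be a positive integer, let $1\le r<k$ and let $r<t\le k$. Let $\hat W=(W_1,\ldots,W_d)$ with each $W_i\in\{+,-\}^r$, and let $\hat p=(p_1,\ldots,p_d)$ be a sequence of pairwise disjoint $r$-tuples $p_j=(a_{j,1},\ldots,a_{j,r})$ with $a_{j,i}\in A_i$. For all sufficiently large $n$ (as a function of $k$ and $d$), for $T\sim\mathcal{R}(n,k)$, $$\Pr\left[|I_{\hat W}(\hat p,t)|\ge n(1-1/2^r)^d+n^{2/3}\right]\le \frac{1}{n^{kd+1}}.$$
   Context: $\mathcal{R}(n,k)$ is the probability space of $k$-partite tournaments with vertex classes $A_1,\ldots,A_k$ of size $n$ each, every edge between distinct classes oriented independently and uniformly at random. For an $r$-tuple $p=(a_1,\ldots,a_r)$ with $a_i\in A_i$, a vertex $v\in A_t$ ($t>r$) and $W\in\{+,-\}^r$, $v$ is $W$-consistent with $p$ if for each $i$, $(v,a_i)\in E(T)$ iff $W(i)=+$; otherwise $v$ is $W$-inconsistent with $p$. For $\hat p,\hat W$ as in the statement, $v\in A_t$ is $\hat W$-inconsistent with $\hat p$ if $v$ is $W_i$-inconsistent with $p_i$ for every $i=1,\ldots,d$, and $I_{\hat W}(\hat p,t)$ is the set of vertices of $A_t$ that are $\hat W$-inconsistent with $\hat p$. *)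

theory Defs
  imports "HOL-Probability.Probability"
begin

type_synonym vertex = "nat \<times> nat"   \<comment> \<open>(class index i in {1..k}, element index x < n)\<close>

definition vclass :: "nat \<Rightarrow> nat \<Rightarrow> vertex set" where
  "vclass n i = {(i, x) | x. x < n}"

definition vertices :: "nat \<Rightarrow> nat \<Rightarrow> vertex set" where
  "vertices n k = (\<Union>i\<in>{1..k}. vclass n i)"

definition kpartite_tournaments :: "nat \<Rightarrow> nat \<Rightarrow> (vertex \<times> vertex) set set" where
  "kpartite_tournaments n k =
     {E. E \<subseteq> {(u, v). u \<in> vertices n k \<and> v \<in> vertices n k \<and> fst u \<noteq> fst v} \<and>
         (\<forall>u\<in>vertices n k. \<forall>v\<in>vertices n k. fst u \<noteq> fst v \<longrightarrow> ((u, v) \<in> E \<longleftrightarrow> (v, u) \<notin> E))}"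

text \<open>R(n,k): uniform distribution over all such tournaments, equivalently independent
  uniform orientations of every edge.\<close>
definition R :: "nat \<Rightarrow> nat \<Rightarrow> (vertex \<times> vertex) set pmf" where
  "R n k = pmf_of_set (kpartite_tournaments n k)"

text \<open>v is W-consistent with the r-tuple p (p i is the i-th entry, i = 1..r);
  W i = True encodes +.\<close>
definition consistent ::
  "(vertex \<times> vertex) set \<Rightarrow> nat \<Rightarrow> (nat \<Rightarrow> bool) \<Rightarrow> (nat \<Rightarrow> vertex) \<Rightarrow> vertex \<Rightarrow> bool" where
  "consistent E r W p v = (\<forall>i\<in>{1..r}. ((v, p i) \<in> E \<longleftrightarrow> W i))"

definition inconsistent_set ::
  "(vertex \<times> vertex) set \<Rightarrow> nat \<Rightarrow> nat \<Rightarrow> nat \<Rightarrow> (nat \<Rightarrow> nat \<Rightarrow> bool)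
     \<Rightarrow> (nat \<Rightarrow> nat \<Rightarrow> vertex) \<Rightarrow> nat \<Rightarrow> vertex set" where
  "inconsistent_set E n r d W p t =
     {v \<in> vclass n t. \<forall>j\<in>{1..d}. \<not> consistent E r (W j) (p j) v}"

end

theory Submission
  imports Defs "HOL-Real_Asymp.Real_Asymp"
begin

(* A random k-partite tournament is the same as one fair coin for every pair of vertices in
   different classes.  A vertex (t, x) of A_t is inconsistent with (p_j, W_j) iff one of the r
   coins on the edges between (t, x) and the entries of p_j agrees with W_j.  Since the tuples
   p_j are disjoint and lie in classes below t, the coins involved are pairwise distinct for
   all x, j and i, so the n vertices of A_t are independently inconsistent with probability
   (1 - 2^-r)^d each: |I_W(p, t)| is binomially distributed.  Hoeffding's inequality bounds the
   tail by exp (-2 n^(1/3)), which is eventually below n^-(kd+1). *)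

lemma map_pmf_bool_eq_bernoulli:
  "map_pmf P M = bernoulli_pmf (measure_pmf.prob M {x. P x})"
proof (rule pmf_eqI)
  fix b :: bool
  have "P -` {b} = (if b then {x. P x} else UNIV - {x. P x})" by auto
  then show "pmf (map_pmf P M) b = pmf (bernoulli_pmf (measure_pmf.prob M {x. P x})) b"
    using measure_pmf.prob_compl[of "{x. P x}" M] by (simp add: pmf_map)
qed

lemma map_pmf_Pi_pmf_reindex:
  assumes I: "finite I" and inj: "inj_on h D" and hD: "h ` D \<subseteq> I"
  shows "map_pmf (\<lambda>g y. if y \<in> D then g (h y) else dflt) (Pi_pmf I dflt' (\<lambda>_. c))
         = Pi_pmf D dflt (\<lambda>_. c)"
proof (rule pmf_eqI)
  fix F
  let ?\<phi> = "\<lambda>g y. if y \<in> D then g (h y) else dflt"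
  have D: "finite D" using finite_imageD[OF finite_subset[OF hD I] inj] .
  show "pmf (map_pmf ?\<phi> (Pi_pmf I dflt' (\<lambda>_. c))) F = pmf (Pi_pmf D dflt (\<lambda>_. c)) F"
  proof (cases "\<forall>y. y \<notin> D \<longrightarrow> F y = dflt")
    case True
    define B where "B x = (if x \<in> h ` D then {F (inv_into D h x)} else UNIV)" for x
    have "?\<phi> -` {F} = Pi I B"
      using True inj hD by (auto simp: B_def Pi_def fun_eq_iff) (metis image_eqI inv_into_f_f subsetD)
    then have "pmf (map_pmf ?\<phi> (Pi_pmf I dflt' (\<lambda>_. c))) F = (\<Prod>x\<in>I. measure_pmf.prob c (B x))"
      by (simp add: pmf_map measure_Pi_pmf_Pi I)
    also have "\<dots> = (\<Prod>x\<in>h ` D. pmf c (F (inv_into D h x)))"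
      using hD by (intro prod.mono_neutral_cong_right I) (auto simp: B_def measure_pmf_single)
    also have "\<dots> = (\<Prod>y\<in>D. pmf c (F y))"
      using inj by (simp add: prod.reindex)
    finally show ?thesis using True by (simp add: pmf_Pi D)
  next
    case False
    then have "?\<phi> -` {F} = {}" by auto
    then show ?thesis using False by (auto simp: pmf_map intro!: pmf_Pi_outside D)
  qed
qed

lemma map_pmf_Pi_pmf_curry:
  assumes A: "finite A" and B: "finite B"
  shows "map_pmf (\<lambda>G a. if a \<in> A then (\<lambda>b. G (a, b)) else (\<lambda>_. dflt))
           (Pi_pmf (A \<times> B) dflt (\<lambda>_. c))
         = Pi_pmf A (\<lambda>_. dflt) (\<lambda>_. Pi_pmf B dflt (\<lambda>_. c))"
proof (rule pmf_eqI)
  fix F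
  let ?cur = "\<lambda>G a. if a \<in> A then (\<lambda>b. G (a, b)) else (\<lambda>_. dflt)"
  let ?M = "Pi_pmf (A \<times> B) dflt (\<lambda>_. c)"
  let ?supp = "{G. \<forall>x. x \<notin> A \<times> B \<longrightarrow> G x = dflt}"
  define ok where
    "ok \<longleftrightarrow> (\<forall>a. a \<notin> A \<longrightarrow> F a = (\<lambda>_. dflt)) \<and> (\<forall>a\<in>A. \<forall>b. b \<notin> B \<longrightarrow> F a b = dflt)"
  have AB: "finite (A \<times> B)" using A B by simp
  have "pmf (map_pmf ?cur ?M) F = measure_pmf.prob ?M (?cur -` {F} \<inter> ?supp)"
    by (simp add: pmf_map, intro measure_prob_cong_0) (auto simp: pmf_Pi_outside AB)
  also have "?cur -` {F} \<inter> ?supp = (if ok then {\<lambda>(a, b). F a b} else {})"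
    by (auto simp: ok_def fun_eq_iff split: if_splits)
  also have "measure_pmf.prob ?M \<dots> = (if ok then \<Prod>a\<in>A. \<Prod>b\<in>B. pmf c (F a b) else 0)"
    by (auto simp: measure_pmf_single pmf_Pi AB ok_def prod.cartesian_product split_beta)
  also have "\<dots> = pmf (Pi_pmf A (\<lambda>_. dflt) (\<lambda>_. Pi_pmf B dflt (\<lambda>_. c))) F"
    by (auto simp: ok_def pmf_Pi A B fun_eq_iff intro!: prod.cong)
  finally show "pmf (map_pmf ?cur ?M) F = pmf (Pi_pmf A (\<lambda>_. dflt) (\<lambda>_. Pi_pmf B dflt (\<lambda>_. c))) F" .
qed

lemma map_pmf_card_rows_Pi_pmf:
  assumes A: "finite A" and B: "finite B"
  shows "map_pmf (\<lambda>G. card {a\<in>A. P (\<lambda>b. G (a, b))}) (Pi_pmf (A \<times> B) dflt (\<lambda>_. c))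
         = binomial_pmf (card A) (measure_pmf.prob (Pi_pmf B dflt (\<lambda>_. c)) {f. P f})"
proof -
  let ?Q = "Pi_pmf B dflt (\<lambda>_. c)"
  let ?cur = "\<lambda>G a. if a \<in> A then (\<lambda>b. G (a, b)) else (\<lambda>_. dflt)"
  have "binomial_pmf (card A) (measure_pmf.prob ?Q {f. P f})
        = map_pmf (\<lambda>f. card {a\<in>A. f a}) (Pi_pmf A (P (\<lambda>_. dflt)) (\<lambda>_. map_pmf P ?Q))"
    by (simp only: map_pmf_bool_eq_bernoulli, rule binomial_pmf_altdef') (auto simp: A)
  also have "Pi_pmf A (P (\<lambda>_. dflt)) (\<lambda>_. map_pmf P ?Q)
      = map_pmf ((\<circ>) P) (Pi_pmf A (\<lambda>_. dflt) (\<lambda>_. ?Q))"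
    by (rule Pi_pmf_map) (simp_all add: A)
  also have "Pi_pmf A (\<lambda>_. dflt) (\<lambda>_. ?Q) = map_pmf ?cur (Pi_pmf (A \<times> B) dflt (\<lambda>_. c))"
    by (rule map_pmf_Pi_pmf_curry[symmetric, OF A B])
  finally show ?thesis
    by (simp add: pmf.map_comp o_def cong: conj_cong)
qed

lemma prob_fair_coins_agree_somewhere:
  fixes w :: "'a \<Rightarrow> bool"
  assumes B: "finite B"
  shows "measure_pmf.prob (Pi_pmf B dflt (\<lambda>_. pmf_of_set UNIV)) {f. \<exists>i\<in>B. f i = w i}
         = 1 - 1 / 2 ^ card B"
proof -
  let ?Q = "Pi_pmf B dflt (\<lambda>_. pmf_of_set (UNIV :: bool set))"
  have "measure_pmf.prob ?Q (Pi B (\<lambda>i. {\<not> w i})) = (1 / 2) ^ card B"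
    by (simp add: measure_Pi_pmf_Pi B measure_pmf_of_set)
  moreover have "{f. \<exists>i\<in>B. f i = w i} = UNIV - Pi B (\<lambda>i. {\<not> w i})"
    by (auto simp: Pi_def)
  ultimately show ?thesis
    using measure_pmf.prob_compl[of "Pi B (\<lambda>i. {\<not> w i})" ?Q] by (simp add: power_one_over)
qed

lemma prob_fair_coins_agree_in_every_row:
  fixes W :: "'a \<Rightarrow> 'b \<Rightarrow> bool"
  assumes J: "finite J" and B: "finite B"
  shows "measure_pmf.prob (Pi_pmf (J \<times> B) dflt (\<lambda>_. pmf_of_set UNIV))
           {f. \<forall>j\<in>J. \<exists>i\<in>B. f (j, i) = W j i}
         = (1 - 1 / 2 ^ card B) ^ card J"
proof -
  let ?c = "pmf_of_set (UNIV :: bool set)"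
  let ?cur = "\<lambda>G a. if a \<in> J then (\<lambda>b. G (a, b)) else (\<lambda>_. dflt)"
  have "{f. \<forall>j\<in>J. \<exists>i\<in>B. f (j, i) = W j i} = ?cur -` Pi J (\<lambda>j. {f. \<exists>i\<in>B. f i = W j i})"
    by (auto simp: Pi_def)
  then have "measure_pmf.prob (Pi_pmf (J \<times> B) dflt (\<lambda>_. ?c)) {f. \<forall>j\<in>J. \<exists>i\<in>B. f (j, i) = W j i}
      = measure_pmf.prob (Pi_pmf J (\<lambda>_. dflt) (\<lambda>_. Pi_pmf B dflt (\<lambda>_. ?c)))
          (Pi J (\<lambda>j. {f. \<exists>i\<in>B. f i = W j i}))"
    by (simp flip: map_pmf_Pi_pmf_curry[OF J B])
  also have "\<dots> = (1 - 1 / 2 ^ card B) ^ card J"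
    by (simp add: measure_Pi_pmf_Pi J prob_fair_coins_agree_somewhere B)
  finally show ?thesis .
qed

definition cross_pairs :: "nat \<Rightarrow> nat \<Rightarrow> (vertex \<times> vertex) set" where
  "cross_pairs n k = {(u, v). u \<in> vertices n k \<and> v \<in> vertices n k \<and> fst u < fst v}"

definition orient :: "nat \<Rightarrow> nat \<Rightarrow> (vertex \<times> vertex \<Rightarrow> bool) \<Rightarrow> (vertex \<times> vertex) set" where
  "orient n k g =
     {(u, v). (u, v) \<in> cross_pairs n k \<and> g (u, v) \<or> (v, u) \<in> cross_pairs n k \<and> \<not> g (v, u)}"

lemma finite_vertices: "finite (vertices n k)"
  by (rule finite_subset[of _ "{1..k} \<times> {..<n}"]) (auto simp: vertices_def vclass_def)

lemma finite_cross_pairs: "finite (cross_pairs n k)"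
  by (rule finite_subset[of _ "vertices n k \<times> vertices n k"]) (auto simp: cross_pairs_def finite_vertices)

lemma orient_cross_pair:
  assumes "(u, v) \<in> cross_pairs n k"
  shows "(u, v) \<in> orient n k g \<longleftrightarrow> g (u, v)" and "(v, u) \<in> orient n k g \<longleftrightarrow> \<not> g (u, v)"
  using assms by (auto simp: orient_def cross_pairs_def)

lemma orient_in_kpartite_tournaments: "orient n k g \<in> kpartite_tournaments n k"
  by (auto simp: kpartite_tournaments_def orient_def cross_pairs_def)

lemma orient_indicator_cross_pairs:
  assumes "E \<in> kpartite_tournaments n k"
  shows "orient n k (\<lambda>e. e \<in> cross_pairs n k \<and> e \<in> E) = E"
proof -
  from assms have E_sub: "E \<subseteq> {(u, v). u \<in> vertices n k \<and> v \<in> vertices n k \<and> fst u \<noteq> fst v}"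
    and E_tour: "\<And>u v. u \<in> vertices n k \<Longrightarrow> v \<in> vertices n k \<Longrightarrow> fst u \<noteq> fst v \<Longrightarrow>
                    (u, v) \<in> E \<longleftrightarrow> (v, u) \<notin> E"
    unfolding kpartite_tournaments_def by blast+
  have "(u, v) \<in> orient n k (\<lambda>e. e \<in> cross_pairs n k \<and> e \<in> E) \<longleftrightarrow> (u, v) \<in> E" for u v
  proof (cases "u \<in> vertices n k \<and> v \<in> vertices n k \<and> fst u \<noteq> fst v")
    case True
    then consider "fst u < fst v" | "fst v < fst u" by linarith
    then show ?thesis using True E_tour[of u v] by cases (auto simp: orient_def cross_pairs_def)
  next
    case False
    then show ?thesis using E_sub by (auto simp: orient_def cross_pairs_def)
  qed
  then show ?thesis by (simp add: set_eq_iff)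
qed

lemma indicator_orient:
  assumes g: "g \<in> PiE_dflt (cross_pairs n k) False (\<lambda>_. UNIV)"
  shows "(\<lambda>e. e \<in> cross_pairs n k \<and> e \<in> orient n k g) = g"
proof
  fix e
  show "(e \<in> cross_pairs n k \<and> e \<in> orient n k g) = g e"
  proof (cases "e \<in> cross_pairs n k")
    case True
    then show ?thesis using orient_cross_pair(1)[of "fst e" "snd e" n k g] by simp
  next
    case False
    moreover have "g e = False"
      using g False unfolding PiE_dflt_def by blast
    ultimately show ?thesis by simp
  qed
qed

lemma bij_betw_orient:
  "bij_betw (orient n k) (PiE_dflt (cross_pairs n k) False (\<lambda>_. UNIV)) (kpartite_tournaments n k)"
  by (rule bij_betw_byWitness[where f' = "\<lambda>E e. e \<in> cross_pairs n k \<and> e \<in> E"])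
     (auto simp: indicator_orient orient_indicator_cross_pairs orient_in_kpartite_tournaments,
      auto simp: PiE_dflt_def)

lemma R_eq_map_orient:
  "R n k = map_pmf (orient n k) (Pi_pmf (cross_pairs n k) False (\<lambda>_. pmf_of_set UNIV))"
proof -
  let ?G = "PiE_dflt (cross_pairs n k) False (\<lambda>_. UNIV :: bool set)"
  have G: "finite ?G" "?G \<noteq> {}"
    by (simp_all add: finite_PiE_dflt finite_cross_pairs)
  have "R n k = pmf_of_set (orient n k ` ?G)"
    using bij_betw_orient[of n k] by (simp add: R_def bij_betw_def)
  also have "\<dots> = map_pmf (orient n k) (pmf_of_set ?G)"
    using bij_betw_orient[of n k] G by (simp add: bij_betw_def map_pmf_of_set_inj)
  also have "pmf_of_set ?G = Pi_pmf (cross_pairs n k) False (\<lambda>_. pmf_of_set UNIV)"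
    by (rule Pi_pmf_of_set[symmetric]) (simp_all add: finite_cross_pairs)
  finally show ?thesis .
qed

lemma inconsistent_set_orient:
  assumes "r < t" "t \<le> k" and p: "\<forall>j\<in>{1..d}. \<forall>i\<in>{1..r}. p j i \<in> vclass n i"
  shows "inconsistent_set (orient n k g) n r d W p t
         = (\<lambda>x. (t, x)) ` {x\<in>{..<n}. \<forall>j\<in>{1..d}. \<exists>i\<in>{1..r}. g (p j i, (t, x)) = W j i}"
proof -
  have cross: "(p j i, (t, x)) \<in> cross_pairs n k" if "x < n" "j \<in> {1..d}" "i \<in> {1..r}" for x j i
    using p that assms by (force simp: cross_pairs_def vertices_def vclass_def)
  have agree: "\<not> consistent (orient n k g) r (W j) (p j) (t, x)
                 \<longleftrightarrow> (\<exists>i\<in>{1..r}. g (p j i, (t, x)) = W j i)"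
    if "x < n" "j \<in> {1..d}" for x j
    using orient_cross_pair(2)[OF cross[OF that]] by (auto simp: consistent_def)
  show ?thesis
    unfolding inconsistent_set_def vclass_def using agree by fastforce
qed

lemma inj_on_tuple_edges:
  assumes p: "\<forall>j\<in>{1..d}. \<forall>i\<in>{1..r}. p j i \<in> vclass n i"
    and disj: "\<forall>j\<in>{1..d}. \<forall>j'\<in>{1..d}. j \<noteq> j' \<longrightarrow> p j ` {1..r} \<inter> p j' ` {1..r} = {}"
  shows "inj_on (\<lambda>(x, j, i). (p j i, (t, x))) (X \<times> {1..d} \<times> {1..r})"
proof (rule inj_onI)
  fix y y' assume y: "y \<in> X \<times> {1..d} \<times> {1..r}" "y' \<in> X \<times> {1..d} \<times> {1..r}"
    and eq: "(case y of (x, j, i) \<Rightarrow> (p j i, (t, x))) = (case y' of (x, j, i) \<Rightarrow> (p j i, (t, x)))"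
  obtain x j i x' j' i' where yy: "y = (x, j, i)" "y' = (x', j', i')"
    by (cases y, cases y') auto
  have j: "j \<in> {1..d}" "j' \<in> {1..d}" and i: "i \<in> {1..r}" "i' \<in> {1..r}"
    using y by (simp_all add: yy)
  have same: "p j i = p j' i'" "x = x'"
    using eq by (simp_all add: yy)
  have "i = fst (p j i)" "i' = fst (p j' i')"
    using p i j by (force simp: vclass_def)+
  then have "i = i'" using same by simp
  moreover have "j = j'" using disj i j same by blast
  ultimately show "y = y'" using same yy by simp
qed

lemma map_pmf_card_inconsistent_set:
  assumes rt: "r < t" and tk: "t \<le> k"
    and p: "\<forall>j\<in>{1..d}. \<forall>i\<in>{1..r}. p j i \<in> vclass n i"
    and disj: "\<forall>j\<in>{1..d}. \<forall>j'\<in>{1..d}. j \<noteq> j' \<longrightarrow> p j ` {1..r} \<inter> p j' ` {1..r} = {}"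
  shows "map_pmf (\<lambda>E. card (inconsistent_set E n r d W p t)) (R n k)
         = binomial_pmf n ((1 - 1 / 2 ^ r) ^ d)"
proof -
  let ?B = "{1..d} \<times> {1..r}"
  let ?D = "{..<n} \<times> ?B"
  let ?coin = "pmf_of_set (UNIV :: bool set)"
  define edge :: "nat \<times> nat \<times> nat \<Rightarrow> vertex \<times> vertex"
    where "edge = (\<lambda>(x, j, i). (p j i, (t, x)))"
  define restrict_edges where
    "restrict_edges g y = (if y \<in> ?D then g (edge y) else False)"
    for g :: "vertex \<times> vertex \<Rightarrow> bool" and y
  define agrees where
    "agrees f \<longleftrightarrow> (\<forall>j\<in>{1..d}. \<exists>i\<in>{1..r}. f (j, i) = W j i)" for f :: "nat \<times> nat \<Rightarrow> bool"
  have "edge ` ?D \<subseteq> cross_pairs n k"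
    using p rt tk by (force simp: edge_def cross_pairs_def vertices_def vclass_def)
  then have reindex: "map_pmf restrict_edges (Pi_pmf (cross_pairs n k) False (\<lambda>_. ?coin))
      = Pi_pmf ?D False (\<lambda>_. ?coin)"
    unfolding restrict_edges_def using inj_on_tuple_edges[OF p disj]
    by (intro map_pmf_Pi_pmf_reindex finite_cross_pairs) (simp_all add: edge_def)
  have count: "card (inconsistent_set (orient n k g) n r d W p t)
      = card {x\<in>{..<n}. agrees (\<lambda>b. restrict_edges g (x, b))}" for g
  proof -
    have "card (inconsistent_set (orient n k g) n r d W p t)
        = card {x\<in>{..<n}. agrees (\<lambda>b. g (edge (x, b)))}"
      by (simp add: inconsistent_set_orient[OF rt tk p] card_image inj_on_def agrees_def edge_def)
    also have "{x\<in>{..<n}. agrees (\<lambda>b. g (edge (x, b)))}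
        = {x\<in>{..<n}. agrees (\<lambda>b. restrict_edges g (x, b))}"
      by (auto simp: agrees_def restrict_edges_def)
    finally show ?thesis .
  qed
  have "map_pmf (\<lambda>E. card (inconsistent_set E n r d W p t)) (R n k)
      = map_pmf (\<lambda>G. card {x\<in>{..<n}. agrees (\<lambda>b. G (x, b))}) (Pi_pmf ?D False (\<lambda>_. ?coin))"
    unfolding R_eq_map_orient reindex[symmetric] by (simp only: pmf.map_comp o_def count)
  also have "\<dots> = binomial_pmf n (measure_pmf.prob (Pi_pmf ?B False (\<lambda>_. ?coin)) {f. agrees f})"
    using map_pmf_card_rows_Pi_pmf[of "{..<n}" ?B agrees False ?coin] by simp
  also have "measure_pmf.prob (Pi_pmf ?B False (\<lambda>_. ?coin)) {f. agrees f} = (1 - 1 / 2 ^ r) ^ d"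
    using prob_fair_coins_agree_in_every_row[of "{1..d}" "{1..r}" False W] by (simp add: agrees_def)
  finally show ?thesis .
qed

lemma eventually_binomial_tail_le_inverse_power:
  "eventually (\<lambda>n. \<forall>q\<in>{0..1}.
     measure_pmf.prob (binomial_pmf n q) {x. real x \<ge> real n * q + real n powr (2/3)}
       \<le> 1 / real n ^ m) sequentially"
proof -
  have "eventually (\<lambda>n. exp (-2 * (real n powr (2/3))\<^sup>2 / real n) * real n ^ m \<le> 1) sequentially"
    by real_asymp
  moreover have "eventually (\<lambda>n. n > 0) sequentially"
    by (rule eventually_gt_at_top)
  ultimately show ?thesis
  proof eventually_elim
    case (elim n)
    show ?case
    proof
      fix q :: real assume "q \<in> {0..1}"
      then have "measure_pmf.prob (binomial_pmf n q) {x. real x \<ge> real n * q + real n powr (2/3)}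
                 \<le> exp (-2 * (real n powr (2/3))\<^sup>2 / real n)"
        using elim by (intro binomial_distribution.prob_ge) (simp_all add: binomial_distribution_def)
      also have "\<dots> \<le> 1 / real n ^ m"
        using elim by (simp add: pos_le_divide_eq)
      finally show "measure_pmf.prob (binomial_pmf n q) {x. real x \<ge> real n * q + real n powr (2/3)}
                    \<le> 1 / real n ^ m" .
    qed
  qed
qed

theorem lemma4p9:
  fixes k d :: nat
  assumes "k \<ge> 2" and "d \<ge> 1"
  shows "\<exists>N. \<forall>n\<ge>N. \<forall>r t (W :: nat \<Rightarrow> nat \<Rightarrow> bool) (p :: nat \<Rightarrow> nat \<Rightarrow> vertex).
           1 \<le> r \<longrightarrow> r < k \<longrightarrow> r < t \<longrightarrow> t \<le> k \<longrightarrow>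
           (\<forall>j\<in>{1..d}. \<forall>i\<in>{1..r}. p j i \<in> vclass n i) \<longrightarrow>
           (\<forall>j\<in>{1..d}. \<forall>j'\<in>{1..d}. j \<noteq> j' \<longrightarrow> p j ` {1..r} \<inter> p j' ` {1..r} = {}) \<longrightarrow>
           measure_pmf.prob (R n k)
             {E. real (card (inconsistent_set E n r d W p t))
                   \<ge> real n * (1 - 1 / 2 ^ r) ^ d + real n powr (2/3)}
           \<le> 1 / real n ^ (k * d + 1)"
proof -
  obtain N where N: "\<And>n q. n \<ge> N \<Longrightarrow> q \<in> {0..1} \<Longrightarrow>
      measure_pmf.prob (binomial_pmf n q) {x. real x \<ge> real n * q + real n powr (2/3)}
        \<le> 1 / real n ^ (k * d + 1)"
    using eventually_binomial_tail_le_inverse_power[of "k * d + 1"]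
    unfolding eventually_sequentially by blast
  show ?thesis
  proof (intro exI[of _ N] allI impI)
    fix n r t and W :: "nat \<Rightarrow> nat \<Rightarrow> bool" and p :: "nat \<Rightarrow> nat \<Rightarrow> vertex"
    assume "N \<le> n" "r < t" "t \<le> k"
      and p: "\<forall>j\<in>{1..d}. \<forall>i\<in>{1..r}. p j i \<in> vclass n i"
      and disj: "\<forall>j\<in>{1..d}. \<forall>j'\<in>{1..d}. j \<noteq> j' \<longrightarrow> p j ` {1..r} \<inter> p j' ` {1..r} = {}"
    let ?q = "(1 - 1 / 2 ^ r) ^ d :: real"
    have "measure_pmf.prob (R n k)
            {E. real (card (inconsistent_set E n r d W p t)) \<ge> real n * ?q + real n powr (2/3)}
          = measure_pmf.prob (map_pmf (\<lambda>E. card (inconsistent_set E n r d W p t)) (R n k))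
              {x. real x \<ge> real n * ?q + real n powr (2/3)}"
      by simp
    also have "\<dots> = measure_pmf.prob (binomial_pmf n ?q) {x. real x \<ge> real n * ?q + real n powr (2/3)}"
      by (simp only: map_pmf_card_inconsistent_set[OF \<open>r < t\<close> \<open>t \<le> k\<close> p disj])
    also have "\<dots> \<le> 1 / real n ^ (k * d + 1)"
      using \<open>N \<le> n\<close> by (intro N) (simp_all add: power_le_one)
    finally show "measure_pmf.prob (R n k)
            {E. real (card (inconsistent_set E n r d W p t)) \<ge> real n * ?q + real n powr (2/3)}
          \<le> 1 / real n ^ (k * d + 1)" .
  qed
qed

end
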